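(* Let $\theta>0$ and $\beta\in(0,1]$, let $\mathfrak{g}(x)=x^\beta$ and $\mathfrak{h}(x)=\frac{1}{\log^{\theta}(1/x)}$ (for small $x>0$, with $\mathfrak h(0)=0$). If $E\subseteq\mathbb{R}^2$ is an $F_{\mathfrak{h}\mathfrak{g}}$-set, then $\dim(E)\ge\frac{\beta}{2}$.
   Context: $\dim$ denotes Hausdorff dimension. For a non-decreasing $h$ with $h(0)=0$, $F\subseteq\mathbb{R}^n$, $\delta>0$: $\mathcal{H}^h_\delta(F)=\inf\{\sum_i h(\mathrm{diam}(F_i)): F\subseteq\bigcup_i F_i,\ \mathrm{diam}(F_i)<\delta\}$ and $\mathcal{H}^h(F)=\sup_{\delta>0}\mathcal{H}^h_\delta(F)$. $\mathbb{S}$ is the unit circle. A set $E\subseteq\mathbb{R}^2$ is an $F_{\mathfrak{h}\mathfrak{g}}$-set if there is $L\subseteq\mathbb{S}$ with $\mathcal{H}^{\mathfrak{g}}(L)>0$ and a number $\delta_E>0$ such that for each $e\in L$ there is a line segment $\ell_e$ in direction $e$ with $\mathcal{H}^{\mathfrak{h}}_\delta(\ell_e\cap E)>1$ for all $0<\delta<\delta_E$. *)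

theory Defs
  imports "HOL-Analysis.Analysis"
begin

text \<open>Hausdorff delta-content with gauge h: infimum over countable covers by sets of
  diameter less than delta (bounded sets, so that diameter is the true diameter;
  finite covers are included by padding with empty sets).\<close>
definition hausdorff_content :: "(real \<Rightarrow> real) \<Rightarrow> real \<Rightarrow> 'a::metric_space set \<Rightarrow> ennreal" where
  "hausdorff_content h \<delta> F =
     (INF C \<in> {C :: nat \<Rightarrow> 'a set. F \<subseteq> (\<Union>i. C i) \<and> (\<forall>i. bounded (C i) \<and> diameter (C i) < \<delta>)}.
        (\<Sum>i. ennreal (h (diameter (C i)))))"

definition hausdorff_measure :: "(real \<Rightarrow> real) \<Rightarrow> 'a::metric_space set \<Rightarrow> ennreal" where
  "hausdorff_measure h F = (SUP \<delta> \<in> {0<..}. hausdorff_content h \<delta> F)"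

definition hausdorff_dim :: "'a::metric_space set \<Rightarrow> real" where
  "hausdorff_dim F = Inf {s::real. 0 < s \<and> hausdorff_measure (\<lambda>x. x powr s) F = 0}"

definition F_hg_set :: "(real \<Rightarrow> real) \<Rightarrow> (real \<Rightarrow> real) \<Rightarrow> (real^2) set \<Rightarrow> bool" where
  "F_hg_set h g E \<longleftrightarrow>
     (\<exists>L. L \<subseteq> sphere 0 1 \<and> hausdorff_measure g L > 0 \<and>
        (\<exists>\<delta>E > 0. \<forall>e \<in> L. \<exists>a t. t > 0 \<and>
           (\<forall>\<delta>. 0 < \<delta> \<and> \<delta> < \<delta>E \<longrightarrow>
              hausdorff_content h \<delta> (closed_segment a (a + t *\<^sub>R e) \<inter> E) > 1)))"

end

theory Submission
  imports Defs "HOL-Real_Asymp.Real_Asymp"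
begin

text \<open>
  Suppose \<open>H^s(E) = 0\<close> for some \<open>0 < s < \<beta>/2\<close> and put
  \<open>\<lambda> = \<beta>/(2s) > 1\<close>, \<open>\<mu> = 1/2 - s/\<beta>\<close>. Cover \<open>E\<close> by sets \<open>C i\<close> of radii \<open>r i \<le> r0\<close>
  with \<open>\<Sum> r i^s\<close> tiny, and sort the radii into the scale blocks \<open>(R_k^\<lambda>, R_k]\<close>,
  \<open>R_k = r0^(\<lambda>^k)\<close>. For \<open>i, j\<close> in one block let \<open>A i j\<close> be the set of directions of the
  vectors \<open>q - p\<close>, \<open>p \<in> C i\<close>, \<open>q \<in> C j\<close>, of length at least \<open>max (r i) (r j)^\<mu>\<close>
  (\<open>block_directions\<close>).
  If a direction \<open>e\<close> lies in no \<open>A i j\<close>, then on every segment in direction \<open>e\<close> the points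
  covered by block \<open>k\<close> are \<open>r0^(\<mu> \<lambda>^k)\<close>-close, so the \<open>h\<close>-content of the segment's trace on
  \<open>E\<close> is at most the geometric series \<open>\<Sum>\<^sub>k h(r0^(\<mu> \<lambda>^k)) \<le> 1\<close>. Hence the sets \<open>A i j\<close>
  cover the direction set \<open>L\<close>; as \<open>diam (A i j)^\<beta> \<le> 4^\<beta> r i^s r j^s\<close>, the \<open>\<beta>\<close>-cost of
  this cover is at most \<open>4^\<beta> (\<Sum> r i^s)^2\<close>, and so \<open>H^\<beta>(L) = 0\<close>, contradicting the
  definition of an \<open>F\<^sub>h\<^sub>g\<close>-set.
\<close>

section \<open>Hausdorff contents\<close>

lemma hausdorff_content_le_cover:
  assumes "F \<subseteq> (\<Union>i. C i)" "\<And>i. bounded (C i)" "\<And>i. diameter (C i) < \<delta>"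
  shows "hausdorff_content h \<delta> F \<le> (\<Sum>i. ennreal (h (diameter (C i))))"
  unfolding hausdorff_content_def using assms by (intro INF_lower) auto

lemma hausdorff_content_le_series:
  assumes "F \<subseteq> (\<Union>k. U k)" "\<And>k. bounded (U k)" "\<And>k. diameter (U k) \<le> \<rho> k"
    and "\<And>k. \<rho> k < \<delta>" and mono: "mono_on {0..} h"
  shows "hausdorff_content h \<delta> F \<le> (\<Sum>k. ennreal (h (\<rho> k)))"
proof -
  have "hausdorff_content h \<delta> F \<le> (\<Sum>k. ennreal (h (diameter (U k))))"
    using assms(1-4) order.strict_trans1 by (intro hausdorff_content_le_cover) blast+
  also have "\<dots> \<le> (\<Sum>k. ennreal (h (\<rho> k)))"
  proof (intro suminf_le summableI ennreal_leI mono_onD[OF mono])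
    fix k
    show "diameter (U k) \<in> {0..}" using diameter_ge_0[OF assms(2)] by simp
    thus "\<rho> k \<in> {0..}" using assms(3)[of k] by simp
  qed (use assms(3) in simp)
  finally show ?thesis .
qed

lemma hausdorff_measure_eq_0I:
  assumes "\<And>\<delta> \<epsilon>. \<delta> > 0 \<Longrightarrow> \<epsilon> > 0 \<Longrightarrow> hausdorff_content h \<delta> F \<le> ennreal \<epsilon>"
  shows "hausdorff_measure h F = 0"
proof -
  have "hausdorff_content h \<delta> F = 0" if "\<delta> > 0" for \<delta>
    using assms[OF that] by (metis ennreal_le_epsilon add_0 le_zero_eq)
  thus ?thesis unfolding hausdorff_measure_def by simp
qed

lemma hausdorff_measure_zero_cover:
  assumes "hausdorff_measure h F = 0" "\<delta> > 0" "\<eta> > 0"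
  obtains C where "F \<subseteq> (\<Union>i. C i)" "\<And>i. bounded (C i)" "\<And>i. diameter (C i) < \<delta>"
    "(\<Sum>i. ennreal (h (diameter (C i)))) < ennreal \<eta>"
proof -
  have "hausdorff_content h \<delta> F \<le> hausdorff_measure h F"
    unfolding hausdorff_measure_def using assms(2) by (intro SUP_upper) auto
  hence "hausdorff_content h \<delta> F < ennreal \<eta>" using assms by simp
  thus ?thesis using that unfolding hausdorff_content_def INF_less_iff by auto
qed

lemma suminf_prod_decode_le:
  fixes F :: "nat \<times> nat \<Rightarrow> ennreal" and a b :: "nat \<Rightarrow> real"
  assumes "\<And>p q. F (p, q) \<le> ennreal (a p) * ennreal (b q)"
  shows "(\<Sum>n. F (prod_decode n)) \<le> (\<Sum>p. ennreal (a p)) * (\<Sum>q. ennreal (b q))"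
proof -
  have "(\<Sum>n. F (prod_decode n)) = (\<Sum>p. \<Sum>q. F (p, q))"
    by (rule suminf_ennreal_2dimen) simp
  also have "\<dots> \<le> (\<Sum>p. \<Sum>q. ennreal (a p) * ennreal (b q))"
    by (intro suminf_le summableI assms)
  also have "\<dots> = (\<Sum>p. ennreal (a p)) * (\<Sum>q. ennreal (b q))"
    by simp
  finally show ?thesis .
qed

section \<open>Every planar set is \<open>H^3\<close>-null\<close>

definition lattice_point :: "nat \<Rightarrow> int \<times> int" where
  "lattice_point k = (int_decode (fst (prod_decode k)), int_decode (snd (prod_decode k)))"

definition grid_cell :: "nat \<Rightarrow> nat \<Rightarrow> nat \<Rightarrow> nat \<Rightarrow> (real^2) set" where
  "grid_cell N k p q = (if p < N \<and> q < N then
     {x. of_int (fst (lattice_point k)) + p / N \<le> x$1 \<and> x$1 \<le> of_int (fst (lattice_point k)) + (p+1) / N \<and>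
         of_int (snd (lattice_point k)) + q / N \<le> x$2 \<and> x$2 \<le> of_int (snd (lattice_point k)) + (q+1) / N}
     else {})"

lemma grid_cell_cover:
  assumes N: "N > 0"
  shows "\<exists>p q. x \<in> grid_cell N (prod_encode (int_encode \<lfloor>x$1\<rfloor>, int_encode \<lfloor>x$2\<rfloor>)) p q"
proof -
  have frac_cell: "\<exists>p<N. p / N \<le> y - \<lfloor>y\<rfloor> \<and> y - \<lfloor>y\<rfloor> \<le> (p+1) / N" for y :: real
  proof -
    define p where "p = nat \<lfloor>(y - \<lfloor>y\<rfloor>) * N\<rfloor>"
    have frac: "0 \<le> y - \<lfloor>y\<rfloor>" "y - \<lfloor>y\<rfloor> < 1" by linarith+
    hence p_eq: "real p = of_int \<lfloor>(y - \<lfloor>y\<rfloor>) * N\<rfloor>" by (simp add: p_def)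
    have "(y - \<lfloor>y\<rfloor>) * N < N" using frac N by simp
    hence "p < N" using p_eq by linarith
    moreover have "real p \<le> (y - \<lfloor>y\<rfloor>) * N" "(y - \<lfloor>y\<rfloor>) * N \<le> real p + 1"
      using p_eq by linarith+
    hence "p / N \<le> y - \<lfloor>y\<rfloor> \<and> y - \<lfloor>y\<rfloor> \<le> (p+1) / N" using N by (simp add: field_simps)
    ultimately show ?thesis by (intro exI[of _ p]) (simp add: add.commute)
  qed
  obtain p where "p < N" "p / N \<le> x$1 - \<lfloor>x$1\<rfloor>" "x$1 - \<lfloor>x$1\<rfloor> \<le> (p+1) / N"
    using frac_cell by blast
  moreover obtain q where "q < N" "q / N \<le> x$2 - \<lfloor>x$2\<rfloor>" "x$2 - \<lfloor>x$2\<rfloor> \<le> (q+1) / N"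
    using frac_cell by blast
  ultimately have "x \<in> grid_cell N (prod_encode (int_encode \<lfloor>x$1\<rfloor>, int_encode \<lfloor>x$2\<rfloor>)) p q"
    by (simp add: grid_cell_def lattice_point_def)
  thus ?thesis by blast
qed

text \<open>A cell of side \<open>1/N\<close> has diameter at most \<open>2/N\<close> (compare with the l1-norm).\<close>
lemma grid_cell_diameter:
  assumes N: "N > 0"
  shows "bounded (grid_cell N k p q)" "diameter (grid_cell N k p q) \<le> 2 / N"
proof -
  let ?C = "grid_cell N k p q"
  have close: "norm (x - y) \<le> 2 / N" if "x \<in> ?C" "y \<in> ?C" for x y
  proof -
    have "\<bar>(x - y)$1\<bar> \<le> 1 / N" "\<bar>(x - y)$2\<bar> \<le> 1 / N" using that N
      by (auto simp: grid_cell_def split: if_splits simp: field_simps abs_le_iff)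
    moreover have "norm (x - y) \<le> \<bar>(x - y)$1\<bar> + \<bar>(x - y)$2\<bar>"
      using norm_le_l1_cart[of "x - y"] by (simp add: sum_2)
    ultimately show ?thesis by simp
  qed
  show "bounded ?C"
  proof (cases "?C = {}")
    case False
    then obtain y where y: "y \<in> ?C" by blast
    have "?C \<subseteq> cball y (2 / N)" using close[OF y] by (auto simp: dist_norm)
    thus ?thesis using bounded_subset by blast
  qed simp
  show "diameter ?C \<le> 2 / N" using close by (intro diameter_le) auto
qed

text \<open>The \<open>N^2\<close> cells of one unit square have total cost \<open>N^2 (2/N)^3 = 8/N\<close>.\<close>
lemma grid_cells_cost:
  assumes N: "N > 0"
  shows "(\<Sum>n. ennreal (diameter (grid_cell N k (fst (prod_decode n)) (snd (prod_decode n))) powr 3))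
           \<le> ennreal (8 / N)"
proof -
  define a where "a p = (if p < N then sqrt ((2 / N)^3) else 0)" for p
  let ?F = "\<lambda>pq. ennreal (diameter (grid_cell N k (fst pq) (snd pq)) powr 3)"
  have "(\<Sum>n. ?F (prod_decode n)) \<le> (\<Sum>p. ennreal (a p)) * (\<Sum>q. ennreal (a q))"
  proof (rule suminf_prod_decode_le)
    fix p q
    show "?F (p, q) \<le> ennreal (a p) * ennreal (a q)"
    proof (cases "p < N \<and> q < N")
      case True
      have "diameter (grid_cell N k p q) powr 3 \<le> (2 / N) powr 3"
        using grid_cell_diameter[OF N] by (intro powr_mono2 diameter_ge_0) auto
      also have "\<dots> = a p * a q" using True N
        by (simp add: a_def powr_realpow real_sqrt_mult[symmetric] power2_eq_square[symmetric])
      finally show ?thesis using True by (simp add: a_def ennreal_mult'[symmetric] ennreal_leI)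
    qed (auto simp: grid_cell_def)
  qed
  hence "(\<Sum>n. ennreal (diameter (grid_cell N k (fst (prod_decode n)) (snd (prod_decode n))) powr 3))
      \<le> (\<Sum>p. ennreal (a p)) * (\<Sum>q. ennreal (a q))"
    by simp
  also have "(\<Sum>p. ennreal (a p)) = ennreal (real N * sqrt ((2 / N)^3))"
  proof -
    have "(\<Sum>p. ennreal (a p)) = (\<Sum>p<N. ennreal (a p))"
      by (rule suminf_finite) (auto simp: a_def)
    thus ?thesis by (simp add: a_def ennreal_of_nat_eq_real_of_nat ennreal_mult')
  qed
  also have "ennreal (real N * sqrt ((2 / N)^3)) * ennreal (real N * sqrt ((2 / N)^3)) = ennreal (8 / N)"
  proof -
    have "(real N * sqrt ((2 / N)^3)) * (real N * sqrt ((2 / N)^3)) = real N ^ 2 * (2 / N)^3"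
      by (simp add: power2_eq_square[symmetric] algebra_simps)
    also have "\<dots> = 8 / N" using N by (simp add: power2_eq_square power3_eq_cube field_simps)
    finally show ?thesis by (simp add: ennreal_mult'[symmetric])
  qed
  finally show ?thesis .
qed

text \<open>Subdividing the \<open>k\<close>-th unit square into cells of side \<open>1/(M 2^k)\<close> covers the plane
  by sets of diameter \<open>\<le> 2/M\<close> and total cost \<open>\<le> 16/M\<close>.\<close>
lemma plane_grid_cover:
  fixes M :: nat
  assumes M: "M > 0"
  obtains C :: "nat \<Rightarrow> (real^2) set" where "UNIV \<subseteq> (\<Union>i. C i)"
    "\<And>i. bounded (C i)" "\<And>i. diameter (C i) \<le> 2 / M"
    "(\<Sum>i. ennreal (diameter (C i) powr 3)) \<le> ennreal (16 / M)"
proof -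
  define N where "N k = M * 2^k" for k
  have N_pos: "N k > 0" for k using M by (simp add: N_def)
  define G where "G kn = grid_cell (N (fst kn)) (fst kn) (fst (prod_decode (snd kn))) (snd (prod_decode (snd kn)))"
    for kn
  define C where "C i = G (prod_decode i)" for i
  have "x \<in> (\<Union>i. C i)" for x
  proof -
    define k where "k = prod_encode (int_encode \<lfloor>x$1\<rfloor>, int_encode \<lfloor>x$2\<rfloor>)"
    obtain p q where "x \<in> grid_cell (N k) k p q" using grid_cell_cover[OF N_pos[of k]] unfolding k_def by blast
    hence "x \<in> C (prod_encode (k, prod_encode (p, q)))" by (simp add: C_def G_def)
    thus ?thesis by blast
  qed
  moreover have "bounded (C i) \<and> diameter (C i) \<le> 2 / M" for i
  proof -
    obtain k n where kn: "prod_decode i = (k, n)" by force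
    have "2 / real (N k) \<le> 2 / M" using M by (simp add: N_def frac_le)
    moreover have "bounded (C i)" "diameter (C i) \<le> 2 / real (N k)"
      using grid_cell_diameter[OF N_pos[of k]] by (simp_all add: C_def G_def kn)
    ultimately show ?thesis by linarith
  qed
  moreover have "(\<Sum>i. ennreal (diameter (C i) powr 3)) \<le> ennreal (16 / M)"
  proof -
    have "(\<Sum>i. ennreal (diameter (C i) powr 3)) = (\<Sum>k. \<Sum>n. ennreal (diameter (G (k, n)) powr 3))"
      unfolding C_def by (rule suminf_ennreal_2dimen) simp
    also have "\<dots> \<le> (\<Sum>k. ennreal (8 / M * (1/2)^k))"
    proof (intro suminf_le summableI)
      fix k
      have "8 / real (N k) = 8 / M * (1/2)^k" by (simp add: N_def field_simps)
      thus "(\<Sum>n. ennreal (diameter (G (k, n)) powr 3)) \<le> ennreal (8 / M * (1/2)^k)"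
        unfolding G_def using grid_cells_cost[OF N_pos[of k], of k] by simp
    qed
    also have "\<dots> = ennreal (8 / M * 2)"
    proof (rule suminf_ennreal_eq)
      have "(\<lambda>k. (1/2::real)^k) sums 2" using geometric_sums[of "1/2::real"] by simp
      thus "(\<lambda>k. 8 / real M * (1/2)^k) sums (8 / real M * 2)" by (rule sums_mult)
    qed simp
    finally show ?thesis by simp
  qed
  ultimately show ?thesis using that by blast
qed

text \<open>Hence \<open>H^3(E) = 0\<close> for every planar set, so the infimum defining \<open>hausdorff_dim E\<close>
  ranges over a nonempty set.\<close>
lemma hausdorff_measure_powr_3_plane:
  fixes E :: "(real^2) set"
  shows "hausdorff_measure (\<lambda>x. x powr 3) E = 0"
proof (rule hausdorff_measure_eq_0I)
  fix \<delta> \<epsilon> :: real assume "\<delta> > 0" "\<epsilon> > 0"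
  obtain M :: nat where M: "real M > max (16 / \<epsilon>) (2 / \<delta>)" using reals_Archimedean2 by blast
  have M_pos: "M > 0" using M \<open>\<delta> > 0\<close> \<open>\<epsilon> > 0\<close>
    by (metis less_max_iff_disj of_nat_0_less_iff divide_pos_pos zero_less_numeral order.strict_trans)
  have "2 / real M < \<delta>" "16 / real M < \<epsilon>"
    using M M_pos \<open>\<delta> > 0\<close> \<open>\<epsilon> > 0\<close> by (simp_all add: field_simps)
  obtain C :: "nat \<Rightarrow> (real^2) set" where cov: "UNIV \<subseteq> (\<Union>i. C i)" and bdd: "\<And>i. bounded (C i)"
    and diam: "\<And>i. diameter (C i) \<le> 2 / M"
    and cost: "(\<Sum>i. ennreal (diameter (C i) powr 3)) \<le> ennreal (16 / M)"
    using plane_grid_cover[OF M_pos] by blast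
  have "diameter (C i) < \<delta>" for i using \<open>2 / real M < \<delta>\<close> diam[of i] by linarith
  hence "hausdorff_content (\<lambda>x. x powr 3) \<delta> E \<le> (\<Sum>i. ennreal (diameter (C i) powr 3))"
    using cov bdd by (intro hausdorff_content_le_cover) blast+
  also have "\<dots> \<le> ennreal (16 / M)" by (rule cost)
  also have "\<dots> \<le> ennreal \<epsilon>" using \<open>16 / real M < \<epsilon>\<close> by (intro ennreal_leI) simp
  finally show "hausdorff_content (\<lambda>x. x powr 3) \<delta> E \<le> ennreal \<epsilon>" .
qed

section \<open>Direction sets\<close>

definition directions :: "'a::real_normed_vector set \<Rightarrow> 'a set \<Rightarrow> real \<Rightarrow> 'a set" where
  "directions P Q \<rho> = {(q - p) /\<^sub>R norm (q - p) | p q. p \<in> P \<and> q \<in> Q \<and> \<rho> \<le> dist p q}"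

lemma norm_normalize_diff_le:
  fixes v w :: "'a::real_normed_vector"
  assumes "v \<noteq> 0" "w \<noteq> 0"
  shows "norm (v /\<^sub>R norm v - w /\<^sub>R norm w) \<le> 2 * norm (v - w) / norm v"
proof -
  have "v /\<^sub>R norm v - w /\<^sub>R norm w = (v - w) /\<^sub>R norm v + (1 / norm v - 1 / norm w) *\<^sub>R w"
    by (simp add: algebra_simps divide_inverse)
  also have "norm \<dots> \<le> norm ((v - w) /\<^sub>R norm v) + norm ((1 / norm v - 1 / norm w) *\<^sub>R w)"
    by (rule norm_triangle_ineq)
  also have "\<dots> = norm (v - w) / norm v + \<bar>1 / norm v - 1 / norm w\<bar> * norm w"
    by (simp add: divide_inverse mult.commute)
  also have "\<bar>1 / norm v - 1 / norm w\<bar> * norm w = \<bar>norm w - norm v\<bar> / norm v"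
    using assms by (simp add: field_simps abs_div abs_mult)
  also have "\<bar>norm w - norm v\<bar> \<le> norm (v - w)"
    by (metis abs_minus_commute norm_triangle_ineq3)
  hence "\<bar>norm w - norm v\<bar> / norm v \<le> norm (v - w) / norm v"
    using assms by (simp add: divide_right_mono)
  finally show ?thesis by simp
qed

lemma directions_subset_sphere:
  assumes "\<rho> > 0"
  shows "directions P Q \<rho> \<subseteq> sphere 0 1"
proof
  fix u assume "u \<in> directions P Q \<rho>"
  then obtain p q where "\<rho> \<le> dist p q" "u = (q - p) /\<^sub>R norm (q - p)"
    unfolding directions_def by blast
  moreover have "q - p \<noteq> 0" using calculation(1) assms by auto
  ultimately show "u \<in> sphere 0 1" by simp
qed

lemma diameter_directions_le:
  assumes "\<rho> > 0" "bounded P" "bounded Q"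
  shows "diameter (directions P Q \<rho>) \<le> 2 * (diameter P + diameter Q) / \<rho>"
proof (rule diameter_le)
  show "directions P Q \<rho> \<noteq> {} \<or> 0 \<le> 2 * (diameter P + diameter Q) / \<rho>"
    using assms diameter_ge_0[OF assms(2)] diameter_ge_0[OF assms(3)] by simp
next
  fix u u' assume "u \<in> directions P Q \<rho>" "u' \<in> directions P Q \<rho>"
  then obtain p q p' q' where pq: "p \<in> P" "q \<in> Q" "\<rho> \<le> dist p q" "u = (q - p) /\<^sub>R norm (q - p)"
    and pq': "p' \<in> P" "q' \<in> Q" "\<rho> \<le> dist p' q'" "u' = (q' - p') /\<^sub>R norm (q' - p')"
    unfolding directions_def by blast
  have long: "\<rho> \<le> norm (q - p)" using pq(3) by (simp add: dist_norm norm_minus_commute)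
  have nonzero: "q - p \<noteq> 0" "q' - p' \<noteq> 0" using pq(3) pq'(3) assms(1) by auto
  have "(q - p) - (q' - p') = (q - q') - (p - p')" by (simp add: algebra_simps)
  hence "norm ((q - p) - (q' - p')) \<le> dist q q' + dist p p'"
    by (metis dist_norm norm_triangle_ineq4)
  also have "\<dots> \<le> diameter Q + diameter P"
    using diameter_bounded_bound[OF assms(3) pq(2) pq'(2)] diameter_bounded_bound[OF assms(2) pq(1) pq'(1)]
    by linarith
  finally have close: "norm ((q - p) - (q' - p')) \<le> diameter P + diameter Q" by simp
  have "norm (u - u') \<le> 2 * norm ((q - p) - (q' - p')) / norm (q - p)"
    unfolding pq(4) pq'(4) by (rule norm_normalize_diff_le[OF nonzero])
  also have "\<dots> \<le> 2 * (diameter P + diameter Q) / \<rho>"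
    using close long assms diameter_ge_0[OF assms(2)] diameter_ge_0[OF assms(3)] by (intro frac_le) auto
  finally show "norm (u - u') \<le> 2 * (diameter P + diameter Q) / \<rho>" .
qed

lemma collinear_points_close:
  assumes e: "norm e = 1" and x: "x = a + u *\<^sub>R e" "x \<in> P" and y: "y = a + v *\<^sub>R e" "y \<in> Q"
    and "\<rho> > 0" and PQ: "e \<notin> directions P Q \<rho>" and QP: "e \<notin> directions Q P \<rho>"
  shows "dist x y < \<rho>"
proof (rule ccontr)
  assume "\<not> dist x y < \<rho>"
  hence far: "\<rho> \<le> dist x y" "\<rho> \<le> dist y x" by (simp_all add: dist_commute)
  consider "u < v" | "v < u" | "u = v" by linarith
  thus False
  proof cases
    case 1
    have "y - x = (v - u) *\<^sub>R e" by (simp add: x y algebra_simps)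
    hence "(y - x) /\<^sub>R norm (y - x) = e" using 1 e by simp
    thus False using PQ x y far(1) unfolding directions_def by blast
  next
    case 2
    have "x - y = (u - v) *\<^sub>R e" by (simp add: x y algebra_simps)
    hence "(x - y) /\<^sub>R norm (x - y) = e" using 2 e by simp
    thus False using QP x y far(2) unfolding directions_def by blast
  next
    case 3
    thus False using far \<open>\<rho> > 0\<close> by (simp add: x y)
  qed
qed

section \<open>Scale blocks\<close>

text \<open>Radii \<open>r \<in> (0, r0]\<close> are sorted into the blocks \<open>(R_k^\<lambda>, R_k]\<close> with \<open>R_k = r0^(\<lambda>^k)\<close>;
  \<open>scale_block r0 \<lambda> r\<close> is the index \<open>k\<close> of the block containing \<open>r\<close>.\<close>
definition scale_block :: "real \<Rightarrow> real \<Rightarrow> real \<Rightarrow> nat" where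
  "scale_block r0 lam r = nat \<lfloor>ln (ln r / ln r0) / ln lam\<rfloor>"

lemma scale_block_bounds:
  assumes r0: "0 < r0" "r0 < 1" and lam: "lam > 1" and r: "0 < r" "r \<le> r0"
  defines "k \<equiv> scale_block r0 lam r"
  shows "r \<le> r0 powr (lam ^ k)" and "(r0 powr (lam ^ k)) powr lam < r"
proof -
  define t where "t = ln r / ln r0"
  have r_eq: "r = r0 powr t" using r0 r by (simp add: t_def powr_def)
  have "ln r \<le> ln r0" "ln r0 < 0" using r0 r by simp_all
  hence t1: "1 \<le> t" by (simp add: t_def le_divide_eq)
  define y where "y = ln t / ln lam"
  have "0 \<le> y" using t1 lam by (simp add: y_def)
  hence k_y: "real k \<le> y" "y < real k + 1"
    by (simp_all add: k_def scale_block_def t_def[symmetric] y_def[symmetric])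
  have t_eq: "lam powr y = t" using t1 lam by (simp add: y_def powr_def)
  have "lam ^ k \<le> t"
    using lam k_y unfolding t_eq[symmetric] by (simp add: powr_realpow[symmetric] powr_mono)
  thus "r \<le> r0 powr (lam ^ k)" unfolding r_eq using r0 by (intro powr_mono') auto
  have "lam powr y < lam powr (real k + 1)" using lam k_y by (intro powr_less_mono) auto
  hence "t < lam ^ (k + 1)"
    unfolding t_eq using lam powr_realpow[of lam "k + 1"] by (simp add: add.commute)
  hence "r0 powr (lam ^ (k + 1)) < r" unfolding r_eq using r0 by (intro powr_less_mono') auto
  thus "(r0 powr (lam ^ k)) powr lam < r" by (simp add: powr_powr mult.commute)
qed

lemma same_scale_block:
  assumes r0: "0 < r0" "r0 < 1" and lam: "lam > 1"
    and r: "0 < r" "r \<le> r0" and r': "0 < r'" "r' \<le> r0"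
    and same: "scale_block r0 lam r = scale_block r0 lam r'"
  shows "max r r' \<le> r0 powr (lam ^ scale_block r0 lam r)" "max r r' powr lam \<le> min r r'"
proof -
  let ?R = "r0 powr (lam ^ scale_block r0 lam r)"
  have R: "r \<le> ?R" "r' \<le> ?R" "?R powr lam < r" "?R powr lam < r'"
    using scale_block_bounds[OF r0 lam r] scale_block_bounds[OF r0 lam r'] same by simp_all
  thus "max r r' \<le> ?R" by simp
  have "max r r' powr lam \<le> ?R powr lam" using R r r' lam by (intro powr_mono2) auto
  thus "max r r' powr lam \<le> min r r'" using R by simp
qed

lemma powr_max_le_product:
  fixes a b lam s :: real
  assumes "0 < a" "0 < b" "max a b powr lam \<le> min a b" "0 \<le> s"
  shows "max a b powr (s + lam * s) \<le> a powr s * b powr s"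
proof -
  have "max a b powr (s + lam * s) = max a b powr s * (max a b powr lam) powr s"
    by (simp add: powr_add powr_powr)
  also have "\<dots> \<le> max a b powr s * min a b powr s"
    using assms by (intro mult_left_mono powr_mono2) auto
  also have "\<dots> = a powr s * b powr s" by (simp add: max_def min_def mult.commute)
  finally show ?thesis .
qed

section \<open>The logarithmic gauge along iterated powers\<close>

text \<open>Along the radii \<open>r0^(\<mu> \<lambda>^k)\<close> the gauge \<open>h(x) = 1/log(1/x)^\<theta>\<close> decays geometrically with
  ratio \<open>\<lambda>^-\<theta>\<close>; for \<open>r0\<close> small the whole series is at most \<open>1\<close>.\<close>
lemma log_gauge_series_le_1:
  fixes h :: "real \<Rightarrow> real"
  assumes \<theta>: "\<theta> > 0" and \<mu>: "\<mu> > 0" and r0: "0 < r0" "r0 < 1" and lam: "lam > 1"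
    and hform: "\<And>x. 0 < x \<Longrightarrow> x < \<epsilon>0 \<Longrightarrow> h x = 1 / (ln (1 / x)) powr \<theta>"
    and small: "r0 powr \<mu> < \<epsilon>0"
    and large: "1 / (1 - 1 / lam powr \<theta>) \<le> (\<mu> * ln (1 / r0)) powr \<theta>"
  shows "(\<Sum>k. ennreal (h (r0 powr (\<mu> * lam ^ k)))) \<le> 1"
proof -
  define c where "c = 1 / (\<mu> * ln (1 / r0)) powr \<theta>"
  define q where "q = 1 / lam powr \<theta>"
  have q: "0 < q" "q < 1" using lam \<theta> by (simp_all add: q_def)
  have ln_pos: "ln (1 / r0) > 0" using r0 by simp
  have h_eq: "h (r0 powr (\<mu> * lam ^ k)) = c * q ^ k" for k
  proof -
    have "1 \<le> lam ^ k" using lam by (simp add: one_le_power)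
    hence "r0 powr (\<mu> * lam ^ k) \<le> r0 powr \<mu>" using r0 \<mu> by (intro powr_mono') auto
    hence "h (r0 powr (\<mu> * lam ^ k)) = 1 / ln (1 / r0 powr (\<mu> * lam ^ k)) powr \<theta>"
      using hform r0 small by simp
    also have "ln (1 / r0 powr (\<mu> * lam ^ k)) = (\<mu> * ln (1 / r0)) * lam ^ k"
      using r0 by (simp add: ln_powr ln_div)
    also have "((\<mu> * ln (1 / r0)) * lam ^ k) powr \<theta> = (\<mu> * ln (1 / r0)) powr \<theta> * (lam powr \<theta>) ^ k"
      using \<mu> ln_pos lam by (simp add: powr_mult powr_realpow[symmetric] powr_powr mult.commute)
    finally show ?thesis by (simp add: c_def q_def power_one_over)
  qed
  have "(\<Sum>k. ennreal (h (r0 powr (\<mu> * lam ^ k)))) = ennreal (c * (1 / (1 - q)))"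
    unfolding h_eq
  proof (rule suminf_ennreal_eq)
    have "(\<lambda>k. q ^ k) sums (1 / (1 - q))" using geometric_sums[of q] q by simp
    thus "(\<lambda>k. c * q ^ k) sums (c * (1 / (1 - q)))" by (rule sums_mult)
    show "\<And>k. 0 \<le> c * q ^ k" using q \<mu> ln_pos by (simp add: c_def)
  qed
  also have "ennreal (c * (1 / (1 - q))) \<le> 1"
  proof -
    have "0 < 1 / (1 - q)" using q by simp
    thus ?thesis using large by (simp add: c_def q_def field_simps)
  qed
  finally show ?thesis .
qed

lemma inflate_radii:
  fixes d :: "nat \<Rightarrow> real"
  assumes s: "s > 0" and r0: "r0 > 0" and \<eta>: "\<eta> > 0"
    and d: "\<And>i. d i \<le> r0" and d_sum: "(\<Sum>i. ennreal (d i powr s)) < ennreal \<eta>"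
  obtains r where "\<And>i. 0 < r i" "\<And>i. r i \<le> r0" "\<And>i. d i \<le> r i"
    "(\<Sum>i. ennreal (r i powr s)) \<le> ennreal (2 * \<eta>)"
proof -
  define \<rho> where "\<rho> i = min r0 ((\<eta> / 2 ^ Suc i) powr (1 / s))" for i
  define r where "r i = max (d i) (\<rho> i)" for i
  have \<rho>_pos: "0 < \<rho> i" for i using r0 \<eta> by (simp add: \<rho>_def)
  have \<rho>_cost: "\<rho> i powr s \<le> \<eta> / 2 ^ Suc i" for i
  proof -
    have "\<rho> i powr s \<le> ((\<eta> / 2 ^ Suc i) powr (1 / s)) powr s"
      using \<rho>_pos[of i] s by (intro powr_mono2) (auto simp: \<rho>_def)
    also have "\<dots> = \<eta> / 2 ^ Suc i" using \<eta> s by (simp add: powr_powr)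
    finally show ?thesis .
  qed
  have "(\<Sum>i. ennreal (r i powr s)) \<le> (\<Sum>i. ennreal (d i powr s) + ennreal (\<eta> / 2 ^ Suc i))"
  proof (intro suminf_le summableI)
    fix i
    have "r i powr s = d i powr s \<or> r i powr s = \<rho> i powr s" by (simp add: r_def max_def)
    moreover have "0 \<le> d i powr s" "0 \<le> \<eta> / 2 ^ Suc i" using \<eta> by simp_all
    ultimately have "r i powr s \<le> d i powr s + \<eta> / 2 ^ Suc i"
      using \<rho>_cost[of i] by (elim disjE) linarith+
    thus "ennreal (r i powr s) \<le> ennreal (d i powr s) + ennreal (\<eta> / 2 ^ Suc i)"
      using \<eta> by (simp add: ennreal_plus[symmetric] ennreal_leI del: ennreal_plus)
  qed
  also have "\<dots> = (\<Sum>i. ennreal (d i powr s)) + (\<Sum>i. ennreal (\<eta> / 2 ^ Suc i))"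
    by (rule suminf_add[symmetric]; rule summableI)
  also have "(\<Sum>i. ennreal (\<eta> / 2 ^ Suc i)) = ennreal \<eta>"
  proof (rule suminf_ennreal_eq)
    have "(\<lambda>i. \<eta> * (1/2) ^ Suc i) sums (\<eta> * 1)" by (rule sums_mult[OF power_half_series])
    thus "(\<lambda>i. \<eta> / 2 ^ Suc i) sums \<eta>" by (simp add: power_one_over)
  qed (use \<eta> in simp)
  also have "(\<Sum>i. ennreal (d i powr s)) + ennreal \<eta> \<le> ennreal \<eta> + ennreal \<eta>"
    using d_sum by (intro add_right_mono) simp
  also have "\<dots> = ennreal (2 * \<eta>)" using \<eta> by (simp add: ennreal_plus[symmetric] del: ennreal_plus)
  finally have cost: "(\<Sum>i. ennreal (r i powr s)) \<le> ennreal (2 * \<eta>)" .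
  have "0 < r i" "r i \<le> r0" "d i \<le> r i" for i
    using \<rho>_pos[of i] d[of i] by (simp_all add: r_def less_max_iff_disj) (simp add: \<rho>_def)
  thus ?thesis using that cost by blast
qed

lemma small_scale_exists:
  fixes \<mu> \<theta> \<delta> \<delta>' K :: real
  assumes \<mu>: "0 < \<mu>" "\<mu> < 1" and \<theta>: "\<theta> > 0" and "\<delta> > 0" "\<delta>' > 0"
  obtains r0 where "0 < r0" "r0 < 1" "r0 powr \<mu> < \<delta>" "4 * r0 powr (1 - \<mu>) < \<delta>'"
    "K \<le> (\<mu> * ln (1 / r0)) powr \<theta>"
proof -
  have "eventually (\<lambda>r. 0 < r \<and> r < 1) (at_right (0::real))"
    using eventually_at_right_real[of 0 1] by (rule eventually_mono) auto
  moreover have "((\<lambda>r::real. r powr \<mu>) \<longlongrightarrow> 0) (at_right 0)" using \<mu> by real_asymp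
  hence "eventually (\<lambda>r. r powr \<mu> < \<delta>) (at_right (0::real))" using \<open>\<delta> > 0\<close> by (rule order_tendstoD)
  moreover have "((\<lambda>r::real. 4 * r powr (1 - \<mu>)) \<longlongrightarrow> 0) (at_right 0)" using \<mu> by real_asymp
  hence "eventually (\<lambda>r. 4 * r powr (1 - \<mu>) < \<delta>') (at_right (0::real))" using \<open>\<delta>' > 0\<close>
    by (rule order_tendstoD)
  moreover have "filterlim (\<lambda>r::real. (\<mu> * ln (1 / r)) powr \<theta>) at_top (at_right 0)"
    using \<mu> \<theta> by real_asymp
  hence "eventually (\<lambda>r. K \<le> (\<mu> * ln (1 / r)) powr \<theta>) (at_right (0::real))"
    by (simp add: filterlim_at_top)
  ultimately have "eventually (\<lambda>r. (0 < r \<and> r < 1) \<and> r powr \<mu> < \<delta> \<and> 4 * r powr (1 - \<mu>) < \<delta>' \<and>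
      K \<le> (\<mu> * ln (1 / r)) powr \<theta>) (at_right (0::real))"
    by eventually_elim blast
  thus ?thesis using that eventually_happens'[OF trivial_limit_at_right_real] by blast
qed

section \<open>Block direction sets\<close>

definition block_directions :: "real \<Rightarrow> real \<Rightarrow> real \<Rightarrow> (nat \<Rightarrow> 'a::real_normed_vector set) \<Rightarrow>
    (nat \<Rightarrow> real) \<Rightarrow> nat \<Rightarrow> nat \<Rightarrow> 'a set" where
  "block_directions r0 lam \<mu> C r i j =
     (if scale_block r0 lam (r i) = scale_block r0 lam (r j)
      then directions (C i) (C j) (max (r i) (r j) powr \<mu>) else {})"

text \<open>With \<open>M = max (r i) (r j)\<close> a block direction set has diameter \<open>\<le> 4 M^(1 - \<mu>)\<close>; when
  \<open>s + \<lambda> s = (1 - \<mu>) \<beta>\<close> its \<open>\<beta>\<close>-cost is therefore bounded by the product \<open>r i^s r j^s\<close>.\<close>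
lemma block_directions_cost:
  fixes C :: "nat \<Rightarrow> 'a::real_normed_vector set" and i j :: nat
  assumes r0: "0 < r0" "r0 < 1" and lam: "lam > 1" and \<mu>: "0 < \<mu>" "\<mu> < 1"
    and s: "0 \<le> s" and \<beta>: "0 \<le> \<beta>" and exponent: "s + lam * s = (1 - \<mu>) * \<beta>"
    and C: "\<And>i. bounded (C i)" "\<And>i. diameter (C i) \<le> r i"
    and r: "\<And>i. 0 < r i" "\<And>i. r i \<le> r0"
  defines "B \<equiv> block_directions r0 lam \<mu> C r i j"
  shows "bounded B" "diameter B \<le> 4 * r0 powr (1 - \<mu>)"
    "diameter B powr \<beta> \<le> 4 powr \<beta> * (r i powr s * r j powr s)"
proof -
  let ?bound = "4 powr \<beta> * (r i powr s * r j powr s)"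
  have "bounded B \<and> diameter B \<le> 4 * r0 powr (1 - \<mu>) \<and> diameter B powr \<beta> \<le> ?bound"
  proof (cases "scale_block r0 lam (r i) = scale_block r0 lam (r j)")
    case False
    hence "B = {}" by (simp add: B_def block_directions_def)
    thus ?thesis by simp
  next
    case same: True
    let ?M = "max (r i) (r j)"
    have M: "0 < ?M" "?M \<le> r0" using r[of i] r[of j] by auto
    have B_eq: "B = directions (C i) (C j) (?M powr \<mu>)"
      using same by (simp add: B_def block_directions_def)
    have "B \<subseteq> sphere 0 1" unfolding B_eq using M(1) by (intro directions_subset_sphere) simp
    hence "B \<subseteq> cball 0 1" using sphere_cball by blast
    hence bdd: "bounded B" by (rule bounded_subset[OF bounded_cball])
    have "diameter B \<le> 2 * (diameter (C i) + diameter (C j)) / ?M powr \<mu>"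
      unfolding B_eq using M C by (intro diameter_directions_le) auto
    also have "\<dots> \<le> 2 * (2 * ?M) / ?M powr \<mu>"
      using C[of i] C[of j] M by (intro divide_right_mono) auto
    also have "\<dots> = 4 * ?M powr (1 - \<mu>)" using M by (simp add: powr_diff)
    finally have diam: "diameter B \<le> 4 * ?M powr (1 - \<mu>)" .
    moreover have "?M powr (1 - \<mu>) \<le> r0 powr (1 - \<mu>)" using M \<mu> by (intro powr_mono2) auto
    ultimately have small: "diameter B \<le> 4 * r0 powr (1 - \<mu>)" by linarith
    have "diameter B powr \<beta> \<le> (4 * ?M powr (1 - \<mu>)) powr \<beta>"
      using diam \<beta> bdd by (intro powr_mono2 diameter_ge_0) auto
    also have "\<dots> = 4 powr \<beta> * ?M powr (s + lam * s)"
      using M by (simp add: exponent powr_mult powr_powr)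
    also have "\<dots> \<le> ?bound"
      using same_scale_block(2)[OF r0 lam r(1,2)[of i] r(1,2)[of j] same] r[of i] r[of j] s
      by (intro mult_left_mono powr_max_le_product) auto
    finally show ?thesis using bdd small by blast
  qed
  thus "bounded B" "diameter B \<le> 4 * r0 powr (1 - \<mu>)" "diameter B powr \<beta> \<le> ?bound" by auto
qed

lemma block_directions_content_le:
  fixes C :: "nat \<Rightarrow> 'a::real_normed_vector set" and L :: "'a set"
  assumes r0: "0 < r0" "r0 < 1" and lam: "lam > 1" and \<mu>: "0 < \<mu>" "\<mu> < 1"
    and s: "0 \<le> s" and \<beta>: "0 \<le> \<beta>" and exponent: "s + lam * s = (1 - \<mu>) * \<beta>"
    and C: "\<And>i. bounded (C i)" "\<And>i. diameter (C i) \<le> r i"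
    and r: "\<And>i. 0 < r i" "\<And>i. r i \<le> r0"
    and \<delta>': "4 * r0 powr (1 - \<mu>) < \<delta>'"
    and cover: "L \<subseteq> (\<Union>n. block_directions r0 lam \<mu> C r (fst (prod_decode n)) (snd (prod_decode n)))"
  shows "hausdorff_content (\<lambda>x. x powr \<beta>) \<delta>' L
           \<le> ennreal (4 powr \<beta>) * (\<Sum>i. ennreal (r i powr s)) * (\<Sum>j. ennreal (r j powr s))"
proof -
  define B where "B = block_directions r0 lam \<mu> C r"
  note B_cost = block_directions_cost[where C = C and r = r, OF r0 lam \<mu> s \<beta> exponent C r, folded B_def]
  have B_small: "diameter (B i j) < \<delta>'" for i j using B_cost(2)[where i = i and j = j] \<delta>' by linarith
  have "hausdorff_content (\<lambda>x. x powr \<beta>) \<delta>' L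
      \<le> (\<Sum>n. ennreal (diameter (B (fst (prod_decode n)) (snd (prod_decode n))) powr \<beta>))"
    using cover B_cost(1) B_small unfolding B_def by (intro hausdorff_content_le_cover) blast+
  also have "\<dots> \<le> (\<Sum>i. ennreal (4 powr \<beta> * r i powr s)) * (\<Sum>j. ennreal (r j powr s))"
  proof (rule suminf_prod_decode_le[where F = "\<lambda>ij. ennreal (diameter (B (fst ij) (snd ij)) powr \<beta>)",
        simplified])
    fix i j
    have "ennreal (diameter (B i j) powr \<beta>) \<le> ennreal (4 powr \<beta> * r i powr s * r j powr s)"
      using B_cost(3)[where i = i and j = j] by (intro ennreal_leI) (simp add: mult.assoc)
    also have "\<dots> = ennreal (4 powr \<beta> * r i powr s) * ennreal (r j powr s)"
      by (intro ennreal_mult) (use r s in auto)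
    finally show "ennreal (diameter (B i j) powr \<beta>) \<le> ennreal (4 powr \<beta> * r i powr s) * ennreal (r j powr s)" .
  qed
  also have "\<dots> = ennreal (4 powr \<beta>) * (\<Sum>i. ennreal (r i powr s)) * (\<Sum>j. ennreal (r j powr s))"
    by (simp add: ennreal_mult)
  finally show ?thesis .
qed

lemma segment_block_points_close:
  fixes C :: "nat \<Rightarrow> 'a::real_normed_vector set" and r :: "nat \<Rightarrow> real"
  assumes r0: "0 < r0" "r0 < 1" and lam: "lam > 1" and \<mu>: "\<mu> > 0" and e: "norm e = 1"
    and r: "\<And>i. 0 < r i" "\<And>i. r i \<le> r0"
    and avoid: "\<And>i j. e \<notin> block_directions r0 lam \<mu> C r i j"
    and x: "x \<in> closed_segment a (a + t *\<^sub>R e)" "x \<in> C i" "scale_block r0 lam (r i) = k"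
    and y: "y \<in> closed_segment a (a + t *\<^sub>R e)" "y \<in> C j" "scale_block r0 lam (r j) = k"
  shows "dist x y \<le> r0 powr (\<mu> * lam ^ k)"
proof -
  have on_line: "\<exists>u. z = a + u *\<^sub>R e" if "z \<in> closed_segment a (a + t *\<^sub>R e)" for z
  proof -
    from that obtain v where "z = (1 - v) *\<^sub>R a + v *\<^sub>R (a + t *\<^sub>R e)"
      by (auto simp: closed_segment_def)
    hence "z = a + (v * t) *\<^sub>R e" by (simp add: algebra_simps)
    thus ?thesis by blast
  qed
  obtain u v where u: "x = a + u *\<^sub>R e" and v: "y = a + v *\<^sub>R e"
    using on_line[OF x(1)] on_line[OF y(1)] by blast
  let ?\<rho> = "max (r i) (r j) powr \<mu>"
  have same: "scale_block r0 lam (r i) = scale_block r0 lam (r j)" using x(3) y(3) by simp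
  have "dist x y < ?\<rho>"
  proof (rule collinear_points_close[OF e u x(2) v y(2)])
    show "?\<rho> > 0" using r(1)[of i] by simp
    show "e \<notin> directions (C i) (C j) ?\<rho>"
      using avoid[of i j] same by (simp add: block_directions_def)
    show "e \<notin> directions (C j) (C i) ?\<rho>"
      using avoid[of j i] same by (simp add: block_directions_def max.commute)
  qed
  also have "?\<rho> \<le> (r0 powr (lam ^ k)) powr \<mu>"
    using same_scale_block(1)[OF r0 lam r(1,2)[of i] r(1,2)[of j] same] x(3) r(1)[of i] \<mu>
    by (intro powr_mono2) auto
  also have "\<dots> = r0 powr (\<mu> * lam ^ k)" by (simp add: powr_powr mult.commute)
  finally show ?thesis by simp
qed

text \<open>Consequently the gauge content of such a segment's trace on \<open>E\<close> is at most \<open>1\<close>: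
  the blocks give a cover whose cost is the geometric series of \<open>log_gauge_series_le_1\<close>.\<close>
lemma segment_content_le_1:
  fixes E :: "'a::real_normed_vector set" and C :: "nat \<Rightarrow> 'a set" and h :: "real \<Rightarrow> real"
  assumes \<theta>: "\<theta> > 0" and \<mu>: "\<mu> > 0" and r0: "0 < r0" "r0 < 1" and lam: "lam > 1"
    and hform: "\<And>x. 0 < x \<Longrightarrow> x < \<epsilon>0 \<Longrightarrow> h x = 1 / (ln (1 / x)) powr \<theta>"
    and hmono: "mono_on {0..} h"
    and \<delta>: "r0 powr \<mu> < \<delta>" "\<delta> \<le> \<epsilon>0"
    and large: "1 / (1 - 1 / lam powr \<theta>) \<le> (\<mu> * ln (1 / r0)) powr \<theta>"
    and e: "norm e = 1" and cover: "E \<subseteq> (\<Union>i. C i)"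
    and r: "\<And>i. 0 < r i" "\<And>i. r i \<le> r0"
    and avoid: "\<And>i j. e \<notin> block_directions r0 lam \<mu> C r i j"
  shows "hausdorff_content h \<delta> (closed_segment a (a + t *\<^sub>R e) \<inter> E) \<le> 1"
proof -
  let ?S = "closed_segment a (a + t *\<^sub>R e) \<inter> E"
  define U where "U k = {x \<in> ?S. \<exists>i. scale_block r0 lam (r i) = k \<and> x \<in> C i}" for k
  have "?S \<subseteq> (\<Union>k. U k)" using cover unfolding U_def by blast
  moreover have U_bdd: "bounded (U k)" for k
    by (rule bounded_subset[OF bounded_closed_segment]) (auto simp: U_def)
  moreover have "diameter (U k) \<le> r0 powr (\<mu> * lam ^ k)" for k
    by (rule diameter_le)
       (auto simp: U_def dist_norm[symmetric]
         intro!: segment_block_points_close[OF r0 lam \<mu> e r avoid])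
  moreover have "r0 powr (\<mu> * lam ^ k) < \<delta>" for k
  proof -
    have "\<mu> \<le> \<mu> * lam ^ k" using \<mu> lam by (simp add: one_le_power)
    hence "r0 powr (\<mu> * lam ^ k) \<le> r0 powr \<mu>" using r0 by (intro powr_mono') auto
    thus ?thesis using \<delta> by linarith
  qed
  ultimately have "hausdorff_content h \<delta> ?S \<le> (\<Sum>k. ennreal (h (r0 powr (\<mu> * lam ^ k))))"
    using hmono by (intro hausdorff_content_le_series)
  also have "\<dots> \<le> 1"
    using \<delta> by (intro log_gauge_series_le_1[OF \<theta> \<mu> r0 lam hform _ large]) auto
  finally show ?thesis .
qed

lemma block_directions_cover:
  fixes E L :: "'a::real_normed_vector set" and C :: "nat \<Rightarrow> 'a set" and h :: "real \<Rightarrow> real"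
  assumes \<theta>: "\<theta> > 0" and \<mu>: "\<mu> > 0" and r0: "0 < r0" "r0 < 1" and lam: "lam > 1"
    and hform: "\<And>x. 0 < x \<Longrightarrow> x < \<epsilon>0 \<Longrightarrow> h x = 1 / (ln (1 / x)) powr \<theta>"
    and hmono: "mono_on {0..} h"
    and \<delta>: "r0 powr \<mu> < \<delta>" "\<delta> \<le> \<epsilon>0"
    and large: "1 / (1 - 1 / lam powr \<theta>) \<le> (\<mu> * ln (1 / r0)) powr \<theta>"
    and cover: "E \<subseteq> (\<Union>i. C i)" and r: "\<And>i. 0 < r i" "\<And>i. r i \<le> r0"
    and L_unit: "L \<subseteq> sphere 0 1"
    and L_seg: "\<And>e. e \<in> L \<Longrightarrow> \<exists>a t. hausdorff_content h \<delta> (closed_segment a (a + t *\<^sub>R e) \<inter> E) > 1"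
  shows "L \<subseteq> (\<Union>n. block_directions r0 lam \<mu> C r (fst (prod_decode n)) (snd (prod_decode n)))"
proof
  fix e assume e: "e \<in> L"
  have "\<exists>i j. e \<in> block_directions r0 lam \<mu> C r i j"
  proof (rule ccontr)
    assume "\<nexists>i j. e \<in> block_directions r0 lam \<mu> C r i j"
    hence avoid: "\<And>i j. e \<notin> block_directions r0 lam \<mu> C r i j" by blast
    have "norm e = 1" using L_unit e by auto
    note bound = segment_content_le_1[OF \<theta> \<mu> r0 lam hform hmono \<delta> large this cover r avoid]
    obtain a t where "hausdorff_content h \<delta> (closed_segment a (a + t *\<^sub>R e) \<inter> E) > 1"
      using L_seg[OF e] by blast
    thus False using bound[of a t] by simp
  qed
  then obtain i j where "e \<in> block_directions r0 lam \<mu> C r i j" by blast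
  thus "e \<in> (\<Union>n. block_directions r0 lam \<mu> C r (fst (prod_decode n)) (snd (prod_decode n)))"
    by (intro UN_I[of "prod_encode (i, j)"]) auto
qed

lemma directions_of_segments_null:
  fixes E L :: "'a::real_normed_vector set" and h :: "real \<Rightarrow> real"
  assumes \<theta>: "\<theta> > 0" and s: "0 < s" "s < \<beta> / 2"
    and hform: "\<And>x. 0 < x \<Longrightarrow> x < \<epsilon>0 \<Longrightarrow> h x = 1 / (ln (1 / x)) powr \<theta>"
    and hmono: "mono_on {0..} h"
    and \<delta>: "0 < \<delta>" "\<delta> \<le> \<epsilon>0"
    and E_null: "hausdorff_measure (\<lambda>x. x powr s) E = 0"
    and L_unit: "L \<subseteq> sphere 0 1"
    and L_seg: "\<And>e. e \<in> L \<Longrightarrow> \<exists>a t. hausdorff_content h \<delta> (closed_segment a (a + t *\<^sub>R e) \<inter> E) > 1"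
  shows "hausdorff_measure (\<lambda>x. x powr \<beta>) L = 0"
proof (rule hausdorff_measure_eq_0I)
  fix \<delta>' \<epsilon> :: real assume \<delta>': "\<delta>' > 0" and \<epsilon>: "\<epsilon> > 0"
  define lam where "lam = \<beta> / (2 * s)"
  define \<mu> where "\<mu> = 1 / 2 - s / \<beta>"
  have \<beta>: "\<beta> > 0" using s by simp
  have lam: "lam > 1" using s by (simp add: lam_def field_simps)
  have \<mu>: "0 < \<mu>" "\<mu> < 1" using s \<beta> by (simp_all add: \<mu>_def field_simps)
  have exponent: "s + lam * s = (1 - \<mu>) * \<beta>" using s \<beta> by (simp add: lam_def \<mu>_def field_simps)
  obtain r0 where r0: "0 < r0" "r0 < 1" and r0_small: "r0 powr \<mu> < \<delta>" "4 * r0 powr (1 - \<mu>) < \<delta>'"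
    and large: "1 / (1 - 1 / lam powr \<theta>) \<le> (\<mu> * ln (1 / r0)) powr \<theta>"
    using small_scale_exists[OF \<mu> \<theta> \<delta>(1) \<delta>'] .
  define \<eta> where "\<eta> = sqrt (\<epsilon> / 4 powr (\<beta> + 1))"
  have \<eta>: "\<eta> > 0" and \<eta>_cost: "4 powr \<beta> * (2 * \<eta>) * (2 * \<eta>) = \<epsilon>"
    using \<epsilon> by (simp_all add: \<eta>_def powr_add)
  obtain C where C_cov: "E \<subseteq> (\<Union>i. C i)" and C_bdd: "\<And>i. bounded (C i)"
    and C_small: "\<And>i. diameter (C i) < r0"
    and C_cost: "(\<Sum>i. ennreal (diameter (C i) powr s)) < ennreal \<eta>"
    using hausdorff_measure_zero_cover[OF E_null r0(1) \<eta>] by blast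
  obtain r where r: "\<And>i. 0 < r i" "\<And>i. r i \<le> r0" and C_r: "\<And>i. diameter (C i) \<le> r i"
    and r_cost: "(\<Sum>i. ennreal (r i powr s)) \<le> ennreal (2 * \<eta>)"
    using inflate_radii[OF s(1) r0(1) \<eta> less_imp_le[OF C_small] C_cost] by blast
  have cover: "L \<subseteq> (\<Union>n. block_directions r0 lam \<mu> C r (fst (prod_decode n)) (snd (prod_decode n)))"
    by (rule block_directions_cover[OF \<theta> \<mu>(1) r0 lam hform hmono r0_small(1) \<delta>(2) large C_cov r
          L_unit L_seg])
  have "hausdorff_content (\<lambda>x. x powr \<beta>) \<delta>' L
      \<le> ennreal (4 powr \<beta>) * (\<Sum>i. ennreal (r i powr s)) * (\<Sum>j. ennreal (r j powr s))"
    by (rule block_directions_content_le[OF r0 lam \<mu> less_imp_le[OF s(1)] less_imp_le[OF \<beta>] exponent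
          C_bdd C_r r r0_small(2) cover])
  also have "\<dots> \<le> ennreal (4 powr \<beta>) * ennreal (2 * \<eta>) * ennreal (2 * \<eta>)"
    using r_cost by (intro mult_mono) auto
  also have "\<dots> = ennreal \<epsilon>"
    using \<eta> \<eta>_cost by (simp add: ennreal_mult[symmetric] del: ennreal_mult)
  finally show "hausdorff_content (\<lambda>x. x powr \<beta>) \<delta>' L \<le> ennreal \<epsilon>" .
qed

lemma F_hg_setE:
  assumes "F_hg_set h g E" "\<epsilon>0 > 0"
  obtains L \<delta> where "L \<subseteq> sphere 0 1" "hausdorff_measure g L > 0" "0 < \<delta>" "\<delta> \<le> \<epsilon>0"
    "\<And>e. e \<in> L \<Longrightarrow> \<exists>a t. hausdorff_content h \<delta> (closed_segment a (a + t *\<^sub>R e) \<inter> E) > 1"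
proof -
  obtain L \<delta>E where L: "L \<subseteq> sphere 0 1" "hausdorff_measure g L > 0" and "\<delta>E > 0"
    and L_seg: "\<And>e. e \<in> L \<Longrightarrow> \<exists>a t. t > 0 \<and> (\<forall>\<delta>. 0 < \<delta> \<and> \<delta> < \<delta>E \<longrightarrow>
        hausdorff_content h \<delta> (closed_segment a (a + t *\<^sub>R e) \<inter> E) > 1)"
    using assms(1) unfolding F_hg_set_def by blast
  define \<delta> where "\<delta> = min \<delta>E \<epsilon>0 / 2"
  have \<delta>: "0 < \<delta>" "\<delta> < \<delta>E" "\<delta> \<le> \<epsilon>0" using \<open>\<delta>E > 0\<close> assms(2) by (auto simp: \<delta>_def)
  have "\<exists>a t. hausdorff_content h \<delta> (closed_segment a (a + t *\<^sub>R e) \<inter> E) > 1" if e: "e \<in> L" for e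
  proof -
    obtain a t where "\<forall>\<delta>'. 0 < \<delta>' \<and> \<delta>' < \<delta>E \<longrightarrow>
        hausdorff_content h \<delta>' (closed_segment a (a + t *\<^sub>R e) \<inter> E) > 1"
      using L_seg[OF e] by blast
    thus ?thesis using \<delta>(1,2) by blast
  qed
  thus ?thesis using that L \<delta>(1,3) by blast
qed

text \<open>Every \<open>s \<in> (0, \<beta>/2)\<close> has \<open>H^s(E) > 0\<close> by \<open>directions_of_segments_null\<close>, while
  \<open>H^3(E) = 0\<close>; hence the infimum defining the dimension is at least \<open>\<beta>/2\<close>.\<close>
theorem corollary4p7:
  fixes \<theta> \<beta> :: real and h :: "real \<Rightarrow> real" and E :: "(real^2) set"
  assumes "\<theta> > 0" and "0 < \<beta>" and "\<beta> \<le> 1"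
    and "h 0 = 0" and "mono_on {0..} h"
    and "\<exists>\<epsilon>>0. \<forall>x. 0 < x \<and> x < \<epsilon> \<longrightarrow> h x = 1 / (ln (1 / x)) powr \<theta>"
    and "F_hg_set h (\<lambda>x. x powr \<beta>) E"
  shows "hausdorff_dim E \<ge> \<beta> / 2"
proof -
  obtain \<epsilon>0 where "\<epsilon>0 > 0" and hform: "\<And>x. 0 < x \<Longrightarrow> x < \<epsilon>0 \<Longrightarrow> h x = 1 / (ln (1 / x)) powr \<theta>"
    using assms(6) by blast
  obtain L \<delta> where L_unit: "L \<subseteq> sphere 0 1" and L_pos: "hausdorff_measure (\<lambda>x. x powr \<beta>) L > 0"
    and \<delta>: "0 < \<delta>" "\<delta> \<le> \<epsilon>0"
    and L_seg: "\<And>e. e \<in> L \<Longrightarrow> \<exists>a t. hausdorff_content h \<delta> (closed_segment a (a + t *\<^sub>R e) \<inter> E) > 1"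
    using F_hg_setE[OF assms(7) \<open>\<epsilon>0 > 0\<close>] by blast
  have E_not_null: "hausdorff_measure (\<lambda>x. x powr s) E \<noteq> 0" if "0 < s" "s < \<beta> / 2" for s
    using directions_of_segments_null[OF assms(1) that hform assms(5) \<delta> _ L_unit L_seg] L_pos by auto
  have "3 \<in> {s. 0 < s \<and> hausdorff_measure (\<lambda>x. x powr s) E = 0}"
    using hausdorff_measure_powr_3_plane by simp
  thus ?thesis unfolding hausdorff_dim_def
  proof (intro cInf_greatest)
    fix s assume "s \<in> {s. 0 < s \<and> hausdorff_measure (\<lambda>x. x powr s) E = 0}"
    thus "\<beta> / 2 \<le> s" using E_not_null[of s] by (cases "s < \<beta> / 2") auto
  qed blast
qed

end
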